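(* Let $\{G^i\}_{i\in I}$, $G^i=(V,\{S^i_v\}_{v\in V},\{u^i_v\}_{v\in V})$, be a finite family of games over the same graph $\Gamma=(V,E)$. If $\langle s^i_v\rangle_{v\in V}\in NE(G^i)$ for each $i\in I$, then $\langle\langle s^i_v\rangle_{i\in I}\rangle_{v\in V}\in NE(\prod_{i\in I}G^i)$.
   Context: A game over a finite simple undirected graph $\Gamma=(V,E)$ is a strategic game with player set $V$, finite strategy sets, and real pay-off functions $u_v$ depending only on the strategies of $v$ and its neighbours. $NE(G)$ is the set of pure Nash equilibria. The product $\prod_{i\in I}G^i$ is the game with player set $V$, strategy sets $S_v=\prod_{i\in I}S^i_v$, and pay-offs $u_v=\sum_{i\in I}u^i_v$ (where $u^i_v$ is evaluated at the $i$-th components of the profile); a profile of the product is written $\langle\langle s^i_v\rangle_{i\in I}\rangle_{v\in V}$. *)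

theory Defs
  imports Complex_Main "HOL-Library.FuncSet"
begin

definition simple_graph :: "'v set \<Rightarrow> ('v \<Rightarrow> 'v \<Rightarrow> bool) \<Rightarrow> bool" where
  "simple_graph V E \<longleftrightarrow> finite V \<and>
     (\<forall>v w. E v w \<longrightarrow> v \<in> V \<and> w \<in> V \<and> v \<noteq> w \<and> E w v)"

definition graph_game ::
  "'v set \<Rightarrow> ('v \<Rightarrow> 'v \<Rightarrow> bool) \<Rightarrow> ('v \<Rightarrow> 's set) \<Rightarrow> ('v \<Rightarrow> ('v \<Rightarrow> 's) \<Rightarrow> real) \<Rightarrow> bool" where
  "graph_game V E S u \<longleftrightarrow> simple_graph V E \<and> (\<forall>v\<in>V. finite (S v)) \<and>
     (\<forall>v\<in>V. \<forall>s s'. (\<forall>w\<in>V. (w = v \<or> E v w) \<longrightarrow> s w = s' w) \<longrightarrow> u v s = u v s')"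

definition NE :: "'v set \<Rightarrow> ('v \<Rightarrow> 's set) \<Rightarrow> ('v \<Rightarrow> ('v \<Rightarrow> 's) \<Rightarrow> real) \<Rightarrow> ('v \<Rightarrow> 's) set" where
  "NE V S u = {s. (\<forall>v\<in>V. s v \<in> S v) \<and>
                  (\<forall>v\<in>V. \<forall>t\<in>S v. u v (s(v := t)) \<le> u v s)}"

definition prod_strats :: "'i set \<Rightarrow> ('i \<Rightarrow> 'v \<Rightarrow> 's set) \<Rightarrow> 'v \<Rightarrow> ('i \<Rightarrow> 's) set" where
  "prod_strats I S v = (\<Pi>\<^sub>E i\<in>I. S i v)"

definition prod_payoff ::
  "'i set \<Rightarrow> ('i \<Rightarrow> 'v \<Rightarrow> ('v \<Rightarrow> 's) \<Rightarrow> real) \<Rightarrow> 'v \<Rightarrow> ('v \<Rightarrow> ('i \<Rightarrow> 's)) \<Rightarrow> real" where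
  "prod_payoff I u v p = (\<Sum>i\<in>I. u i v (\<lambda>w. p w i))"

end

theory Submission
  imports Defs
begin

text \<open>A unilateral deviation of player v in the product game is, in every coordinate i,
  a unilateral deviation of v in the game indexed by i; so the pay-off change in the
  product is a sum of non-positive changes. Neither the graph structure nor finiteness
  of the strategy sets plays a role.\<close>

lemma restrict_update_component:
  assumes "i \<in> I"
  shows "(\<lambda>w. ((\<lambda>v. \<lambda>i\<in>I. s i v)(v := t)) w i) = (s i)(v := t i)"
  using assms by (auto simp: fun_eq_iff)

lemma restrict_component:
  assumes "i \<in> I"
  shows "(\<lambda>w. (\<lambda>v. \<lambda>i\<in>I. s i v) w i) = s i"
  using assms by (auto simp: fun_eq_iff)

lemma prod_payoff_deviation_le:
  assumes NE: "\<And>i. i \<in> I \<Longrightarrow> s i \<in> NE V (S i) (u i)"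
    and v: "v \<in> V" and t: "t \<in> prod_strats I S v"
  shows "prod_payoff I u v ((\<lambda>v. \<lambda>i\<in>I. s i v)(v := t))
           \<le> prod_payoff I u v (\<lambda>v. \<lambda>i\<in>I. s i v)"
  unfolding prod_payoff_def
proof (rule sum_mono)
  fix i assume i: "i \<in> I"
  have "t i \<in> S i v"
    using t i by (auto simp: prod_strats_def)
  then have "u i v ((s i)(v := t i)) \<le> u i v (s i)"
    using NE[OF i] v by (simp add: NE_def)
  then show "u i v (\<lambda>w. ((\<lambda>v. \<lambda>i\<in>I. s i v)(v := t)) w i)
               \<le> u i v (\<lambda>w. (\<lambda>v. \<lambda>i\<in>I. s i v) w i)"
    by (simp only: restrict_update_component[OF i] restrict_component[OF i])
qed

lemma NE_prod:
  assumes NE: "\<And>i. i \<in> I \<Longrightarrow> s i \<in> NE V (S i) (u i)"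
  shows "(\<lambda>v. \<lambda>i\<in>I. s i v) \<in> NE V (prod_strats I S) (prod_payoff I u)"
proof -
  have "(\<lambda>i\<in>I. s i v) \<in> prod_strats I S v" if "v \<in> V" for v
    using NE that by (auto simp: prod_strats_def NE_def)
  moreover have "prod_payoff I u v ((\<lambda>v. \<lambda>i\<in>I. s i v)(v := t))
                   \<le> prod_payoff I u v (\<lambda>v. \<lambda>i\<in>I. s i v)"
    if "v \<in> V" and "t \<in> prod_strats I S v" for v t
    using NE that by (rule prod_payoff_deviation_le)
  ultimately show ?thesis
    by (simp add: NE_def)
qed

theorem lemma18:
  fixes V :: "'v set" and E :: "'v \<Rightarrow> 'v \<Rightarrow> bool" and I :: "'i set"
    and S :: "'i \<Rightarrow> 'v \<Rightarrow> 's set" and u :: "'i \<Rightarrow> 'v \<Rightarrow> ('v \<Rightarrow> 's) \<Rightarrow> real"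
    and s :: "'i \<Rightarrow> 'v \<Rightarrow> 's"
  assumes "simple_graph V E"
    and "finite I"
    and "\<And>i. i \<in> I \<Longrightarrow> graph_game V E (S i) (u i)"
    and "\<And>i. i \<in> I \<Longrightarrow> s i \<in> NE V (S i) (u i)"
  shows "(\<lambda>v. \<lambda>i\<in>I. s i v) \<in> NE V (prod_strats I S) (prod_payoff I u)"
  using NE_prod assms(4) .

end
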